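(* Let $W\in\mathbb{R}^{n\times n}$ satisfy $W\mathbf{1}=W^\top\mathbf{1}=\mathbf{1}$. Then the following are equivalent: (i) $W$ is eventually doubly stochastic (EDS); (ii) $W$ is marginally Schur stable with the eigenvalue $1$ simple and strictly dominant. If moreover $W$ is normal ($WW^\top=W^\top W$), then (i) and (ii) are also equivalent to (iii) $I-W^\top W$ is positive semidefinite of corank $1$.
   Context: $W$ is a real matrix (entries of any sign). $W$ is eventually positive (EP) if there is $t_0\in\mathbb{Z}_{\ge0}$ with $W^t$ entrywise positive for all integers $t\ge t_0$; ES means EP and $W\mathbf{1}=\mathbf{1}$; EDS means ES and $W^\top\mathbf{1}=\mathbf{1}$. $W$ is marginally Schur stable if all eigenvalues satisfy $|\lambda|\le1$ and each eigenvalue with $|\lambda|=1$ is a simple root of the minimal polynomial. "The eigenvalue $1$ is simple and strictly dominant" means $1$ has algebraic multiplicity one and $|\lambda|<1$ for every other eigenvalue. Corank means dimension of the kernel. *)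

theory Defs
  imports "Jordan_Normal_Form.Jordan_Normal_Form" "Jordan_Normal_Form.Matrix_Kernel"
begin

definition ones_vec :: "nat \<Rightarrow> 'a :: {zero,one} vec" where
  "ones_vec n = vec n (\<lambda>_. 1)"

definition eventually_positive :: "nat \<Rightarrow> real mat \<Rightarrow> bool" where
  "eventually_positive n W \<longleftrightarrow>
     (\<exists>t0::nat. \<forall>t\<ge>t0. \<forall>i<n. \<forall>j<n. (W ^\<^sub>m t) $$ (i,j) > 0)"

definition eventually_stochastic :: "nat \<Rightarrow> real mat \<Rightarrow> bool" where
  "eventually_stochastic n W \<longleftrightarrow> eventually_positive n W \<and> W *\<^sub>v ones_vec n = ones_vec n"

definition eventually_doubly_stochastic :: "nat \<Rightarrow> real mat \<Rightarrow> bool" where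
  "eventually_doubly_stochastic n W \<longleftrightarrow>
     eventually_stochastic n W \<and> transpose_mat W *\<^sub>v ones_vec n = ones_vec n"

abbreviation cmat :: "real mat \<Rightarrow> complex mat" where
  "cmat W \<equiv> map_mat complex_of_real W"

definition poly_mat_eval :: "nat \<Rightarrow> 'a :: comm_ring_1 poly \<Rightarrow> 'a mat \<Rightarrow> 'a mat" where
  "poly_mat_eval n p A =
     fold (\<lambda>i M. M + coeff p i \<cdot>\<^sub>m (A ^\<^sub>m i)) [0..<Suc (degree p)] (0\<^sub>m n n)"

definition is_min_poly :: "nat \<Rightarrow> 'a :: field mat \<Rightarrow> 'a poly \<Rightarrow> bool" where
  "is_min_poly n A p \<longleftrightarrow> lead_coeff p = 1 \<and> poly_mat_eval n p A = 0\<^sub>m n n \<and>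
     (\<forall>q. q \<noteq> 0 \<and> poly_mat_eval n q A = 0\<^sub>m n n \<longrightarrow> degree p \<le> degree q)"

definition marginally_schur_stable :: "nat \<Rightarrow> real mat \<Rightarrow> bool" where
  "marginally_schur_stable n W \<longleftrightarrow>
     (\<forall>z. eigenvalue (cmat W) z \<longrightarrow> cmod z \<le> 1) \<and>
     (\<forall>z. eigenvalue (cmat W) z \<and> cmod z = 1 \<longrightarrow>
        (\<forall>p. is_min_poly n (cmat W) p \<longrightarrow> Polynomial.order z p = 1))"

definition one_simple_strictly_dominant :: "real mat \<Rightarrow> bool" where
  "one_simple_strictly_dominant W \<longleftrightarrow>
     Polynomial.order 1 (char_poly (cmat W)) = 1 \<and>
     (\<forall>z. eigenvalue (cmat W) z \<and> z \<noteq> 1 \<longrightarrow> cmod z < 1)"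

definition psd_mat :: "nat \<Rightarrow> real mat \<Rightarrow> bool" where
  "psd_mat n A \<longleftrightarrow> (\<forall>x \<in> carrier_vec n. x \<bullet> (A *\<^sub>v x) \<ge> 0)"

end

theory Submission
  imports Defs "Jordan_Normal_Form.Jordan_Normal_Form_Uniqueness" "Jordan_Normal_Form.Spectral_Radius"
begin

text \<open>All three conditions are equivalent to one spectral property of \<open>W\<close>: every complex
  eigenvector whose coordinates sum to zero has an eigenvalue of modulus less than one.
  Since the column sums are one, every eigenvector for an eigenvalue other than one has
  coordinate sum zero; and the property says exactly that the kernel of \<open>(W - I)\<^sup>2\<close> is
  spanned by \<open>1\<close>, which the Jordan form turns into simplicity of the eigenvalue one, for the
  characteristic and for the minimal polynomial.

  A positive power \<open>W\<^sup>t\<close> contracts mean-zero eigenvectors by a Perron-type estimate on the row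
  through a coordinate of maximal modulus. Conversely, the spectral property makes the powers of
  \<open>W - J\<close>, \<open>J = 1 1\<^sup>T / n\<close>, decay geometrically, and \<open>W\<^sup>t = (W - J)\<^sup>t + J\<close> becomes positive.

  Positive semidefiniteness of \<open>I - W\<^sup>T W\<close> with kernel spanned by \<open>1\<close> means that \<open>W\<close> strictly
  shortens every nonzero mean-zero real vector. Applied to real and imaginary parts of an
  eigenvector this gives the spectral property. For normal \<open>W\<close> the converse holds: the sequence
  \<open>|W\<^sup>k y|\<^sup>2\<close> is log-convex by Cauchy-Schwarz, so if it did not decrease at the first step it
  would never decrease, contradicting the geometric decay on mean-zero vectors.\<close>

lemma smult_vec_eq_0_iff:
  fixes v :: "'a :: semiring_no_zero_divisors vec"
  assumes "v \<in> carrier_vec n" and "v \<noteq> 0\<^sub>v n"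
  shows "a \<cdot>\<^sub>v v = 0\<^sub>v n \<longleftrightarrow> a = 0"
proof -
  obtain i where "i < n" "v $ i \<noteq> 0"
    using assms by (metis carrier_vecD eq_vecI index_zero_vec)
  thus ?thesis using assms(1) by (auto dest!: arg_cong[of _ _ "\<lambda>w. w $ i"])
qed

lemma minus_vec_eq_zero_iff:
  "(x :: 'a :: ab_group_add vec) \<in> carrier_vec n \<Longrightarrow> y \<in> carrier_vec n \<Longrightarrow> x - y = 0\<^sub>v n \<longleftrightarrow> x = y"
  by (auto simp: vec_eq_iff)

lemma mult_mat_vec_index_sum:
  assumes "A \<in> carrier_mat nr nc" "v \<in> carrier_vec nc" "i < nr"
  shows "(A *\<^sub>v v) $ i = (\<Sum>j<nc. A $$ (i, j) * v $ j)"
  using assms by (auto simp: scalar_prod_def lessThan_atLeast0 intro!: sum.cong)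

lemma mult_mat_index_sum:
  assumes "A \<in> carrier_mat nr n" "B \<in> carrier_mat n nc" "i < nr" "j < nc"
  shows "(A * B) $$ (i, j) = (\<Sum>k<n. A $$ (i, k) * B $$ (k, j))"
  using assms by (auto simp: scalar_prod_def lessThan_atLeast0 intro!: sum.cong)

lemma scalar_prod_sum:
  "u \<in> carrier_vec n \<Longrightarrow> w \<in> carrier_vec n \<Longrightarrow> u \<bullet> w = (\<Sum>i<n. u $ i * w $ i)"
  by (simp add: scalar_prod_def lessThan_atLeast0)

lemma ones_vec_carrier [simp]: "ones_vec n \<in> carrier_vec n"
  unfolding ones_vec_def by simp

lemma index_ones_vec [simp]: "i < n \<Longrightarrow> ones_vec n $ i = 1" "dim_vec (ones_vec n) = n"
  unfolding ones_vec_def by simp_all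

lemma scalar_prod_ones_vec:
  "(v :: 'a :: semiring_1 vec) \<in> carrier_vec n \<Longrightarrow> v \<bullet> ones_vec n = (\<Sum>i<n. v $ i)"
  unfolding scalar_prod_def ones_vec_def lessThan_atLeast0 by (intro sum.cong) auto

lemma mult_mat_vec_ones_vec_index:
  assumes "(A :: 'a :: semiring_1 mat) \<in> carrier_mat nr nc" "i < nr"
  shows "(A *\<^sub>v ones_vec nc) $ i = (\<Sum>j<nc. A $$ (i, j))"
  using mult_mat_vec_index_sum[OF assms(1) ones_vec_carrier assms(2)] by simp

lemma ones_vec_neq_zero: "0 < n \<Longrightarrow> ones_vec n \<noteq> (0\<^sub>v n :: 'a :: zero_neq_one vec)"
  by (metis index_zero_vec(1) ones_vec_def index_vec zero_neq_one)

lemma smult_ones_vec_scalar_prod_ones_vec: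
  "(c \<cdot>\<^sub>v ones_vec n) \<bullet> ones_vec n = c * (of_nat n :: 'a :: comm_semiring_1)"
  by (simp add: scalar_prod_ones_vec[of _ n] mult.commute)

lemma scalar_prod_add_ones_vec_self:
  assumes "(y :: 'a :: comm_ring_1 vec) \<in> carrier_vec n" "y \<bullet> ones_vec n = 0"
  shows "(y + c \<cdot>\<^sub>v ones_vec n) \<bullet> (y + c \<cdot>\<^sub>v ones_vec n) = y \<bullet> y + c\<^sup>2 * of_nat n"
  using assms comm_scalar_prod[OF assms(1) ones_vec_carrier]
  by (simp add: add_scalar_prod_distrib[of _ n] scalar_prod_add_distrib[of _ n]
      smult_ones_vec_scalar_prod_ones_vec power2_eq_square algebra_simps)

lemma mult_mat_vec_scalar_prod_ones_vec:
  fixes A :: "'a :: comm_semiring_1 mat"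
  assumes A: "A \<in> carrier_mat n n" and cols: "transpose_mat A *\<^sub>v ones_vec n = ones_vec n"
    and x: "x \<in> carrier_vec n"
  shows "(A *\<^sub>v x) \<bullet> ones_vec n = x \<bullet> ones_vec n"
  using transpose_vec_mult_scalar[OF A x ones_vec_carrier] cols comm_scalar_prod[OF _ ones_vec_carrier] A x
  by (metis mult_mat_vec_carrier)

lemma cmat_mult_ones_vec:
  assumes "A \<in> carrier_mat nr nc"
  shows "cmat A *\<^sub>v ones_vec nc = map_vec complex_of_real (A *\<^sub>v ones_vec nc)"
proof (rule eq_vecI)
  fix i assume "i < dim_vec (map_vec complex_of_real (A *\<^sub>v ones_vec nc))"
  hence i: "i < nr" using assms by simp
  show "(cmat A *\<^sub>v ones_vec nc) $ i = map_vec complex_of_real (A *\<^sub>v ones_vec nc) $ i"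
    using mult_mat_vec_ones_vec_index[OF assms i] mult_mat_vec_ones_vec_index[of "cmat A", OF _ i] assms i
    by simp
qed (use assms in simp)

lemma Re_scalar_prod_ones_vec:
  "(v :: complex vec) \<in> carrier_vec n \<Longrightarrow> map_vec Re v \<bullet> ones_vec n = Re (v \<bullet> ones_vec n)"
  "(v :: complex vec) \<in> carrier_vec n \<Longrightarrow> map_vec Im v \<bullet> ones_vec n = Im (v \<bullet> ones_vec n)"
  by (simp_all add: scalar_prod_ones_vec Re_sum Im_sum)

lemma zero_mat_mult_vec [simp]:
  "v \<in> carrier_vec nc \<Longrightarrow> 0\<^sub>m nr nc *\<^sub>v v = (0\<^sub>v nr :: 'a :: semiring_0 vec)"
  by (intro eq_vecI) (auto simp: scalar_prod_def)

lemma mult_mat_vec_zero_vec [simp]: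
  "A \<in> carrier_mat nr nc \<Longrightarrow> A *\<^sub>v 0\<^sub>v nc = (0\<^sub>v nr :: 'a :: semiring_0 vec)"
  by (intro eq_vecI) (auto simp: scalar_prod_def)

lemma mat_eq_zeroI:
  assumes A: "(A :: 'a :: comm_ring_1 mat) \<in> carrier_mat nr nc"
    and zero: "\<And>x. x \<in> carrier_vec nc \<Longrightarrow> A *\<^sub>v x = 0\<^sub>v nr"
  shows "A = 0\<^sub>m nr nc"
proof (rule eq_matI)
  fix i j assume "i < dim_row (0\<^sub>m nr nc :: 'a mat)" "j < dim_col (0\<^sub>m nr nc :: 'a mat)"
  hence ij: "i < nr" "j < nc" by auto
  have "A $$ (i, j) = (\<Sum>k<nc. if k = j then A $$ (i, k) else 0)" using ij by simp
  also have "\<dots> = (\<Sum>k<nc. A $$ (i, k) * unit_vec nc j $ k)"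
    by (intro sum.cong) (auto simp: unit_vec_def)
  also have "\<dots> = (A *\<^sub>v unit_vec nc j) $ i" using mult_mat_vec_index_sum[OF A _ ij(1)] by simp
  also have "\<dots> = 0" using zero[of "unit_vec nc j"] ij by simp
  finally show "A $$ (i, j) = 0\<^sub>m nr nc $$ (i, j)" using ij by simp
qed (use A in auto)

lemma pow_mat_Suc_left:
  assumes "A \<in> carrier_mat n n"
  shows "A ^\<^sub>m Suc k = A * A ^\<^sub>m k"
proof (induct k)
  case (Suc k)
  thus ?case using assms by (simp add: assoc_mult_mat[of A n n "A ^\<^sub>m k" n A])
qed (use assms in simp)

lemma pow_mat_mult_vec_fixed:
  assumes "A \<in> carrier_mat n n" "v \<in> carrier_vec n" "A *\<^sub>v v = v"
  shows "A ^\<^sub>m k *\<^sub>v v = v"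
  by (induct k) (use assms in \<open>auto simp: assoc_mult_mat_vec[of _ n n A n]\<close>)

lemma smult_mat_mult_vec:
  assumes "A \<in> carrier_mat nr nc" "v \<in> carrier_vec nc"
  shows "(k \<cdot>\<^sub>m A) *\<^sub>v v = (k :: 'a :: comm_ring_1) \<cdot>\<^sub>v (A *\<^sub>v v)"
  using assms by (intro eq_vecI) (auto simp: scalar_prod_def sum_distrib_left mult.assoc)

lemma smult_pow_mat:
  assumes "A \<in> carrier_mat n n"
  shows "(a \<cdot>\<^sub>m A) ^\<^sub>m k = (a ^ k :: 'a :: comm_ring_1) \<cdot>\<^sub>m A ^\<^sub>m k"
  using assms by (induct k) (auto intro!: eq_matI simp: mult_smult_assoc_mat mult_smult_distrib ac_simps)

lemma eigenvector_smult_mat: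
  assumes "A \<in> carrier_mat n n" "eigenvector A v z"
  shows "eigenvector (a \<cdot>\<^sub>m A) v (a * z)"
  using assms by (auto simp: eigenvector_def smult_mat_mult_vec smult_smult_assoc)

lemma char_matrix_mult_vec:
  assumes "A \<in> carrier_mat n n" "v \<in> carrier_vec n"
  shows "char_matrix A e *\<^sub>v v = A *\<^sub>v v - e \<cdot>\<^sub>v v"
  using assms by (intro eq_vecI)
    (auto simp: char_matrix_def add_scalar_prod_distrib[of _ n] ring_distribs)

context kernel
begin

lemma lincomb_singleton: "v \<in> mat_kernel A \<Longrightarrow> lincomb a {v} = a v \<cdot>\<^sub>v v"
  unfolding Ker.lincomb_def by (simp add: Ker.finsum_singleton Ker.smult_closed)

lemma span_singleton: "v \<in> mat_kernel A \<Longrightarrow> span {v} = range (\<lambda>c. c \<cdot>\<^sub>v v)"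
  using Ker.finite_span[of "{v}"] lincomb_singleton by auto

lemma fin_dim: "Ker.fin_dim"
  using kernel_basis_exists[OF A] unfolding Ker.fin_dim_def Ker.basis_def by auto

lemma dim_eq_1_iff:
  assumes v: "v \<in> mat_kernel A" and v0: "v \<noteq> 0\<^sub>v nc"
  shows "dim = 1 \<longleftrightarrow> (\<forall>w \<in> mat_kernel A. \<exists>c. w = c \<cdot>\<^sub>v v)"
proof
  have vc: "v \<in> carrier_vec nc" using v mat_kernel[OF A] by auto
  have "lin_indpt {v}"
    by (rule Ker.finite_lin_indpt2)
      (use v smult_vec_eq_0_iff[OF vc v0] in \<open>auto simp: lincomb_singleton\<close>)
  moreover assume "dim = 1"
  ultimately have "basis {v}"
    using Ker.dim_li_is_basis[of "{v}"] fin_dim v by auto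
  thus "\<forall>w \<in> mat_kernel A. \<exists>c. w = c \<cdot>\<^sub>v v"
    using span_singleton[OF v] unfolding Ker.basis_def by auto
next
  assume "\<forall>w \<in> mat_kernel A. \<exists>c. w = c \<cdot>\<^sub>v v"
  hence "gen_set {v}"
    using span_singleton[OF v] Ker.span_is_subset2[of "{v}"] v by auto
  thus "dim = 1" using Ker.dim1I[of v] v v0 by simp
qed

end

lemma kernel_dim_eq_1_iff:
  assumes "A \<in> carrier_mat nr nc" "v \<in> mat_kernel A" "v \<noteq> 0\<^sub>v nc"
  shows "kernel_dim A = 1 \<longleftrightarrow> (\<forall>w \<in> mat_kernel A. \<exists>c. w = c \<cdot>\<^sub>v v)"
proof -
  interpret kernel nr nc A by unfold_locales (rule assms(1))
  show ?thesis using dim_eq_1_iff[OF assms(2,3)] by simp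
qed

section \<open>Polynomials evaluated at matrices\<close>

text \<open>Truncations of the sum defining \<open>poly_mat_eval\<close> to the first \<open>N\<close> terms; since \<open>N\<close> need not
  be tied to the degree, they are additive and multiplicative by plain induction.\<close>
definition poly_mat_eval_upto :: "nat \<Rightarrow> 'a :: comm_ring_1 poly \<Rightarrow> 'a mat \<Rightarrow> nat \<Rightarrow> 'a mat" where
  "poly_mat_eval_upto n p A N = fold (\<lambda>i M. M + coeff p i \<cdot>\<^sub>m (A ^\<^sub>m i)) [0..<N] (0\<^sub>m n n)"

lemma poly_mat_eval_upto_0 [simp]: "poly_mat_eval_upto n p A 0 = 0\<^sub>m n n"
  unfolding poly_mat_eval_upto_def by simp

lemma poly_mat_eval_upto_Suc:
  "poly_mat_eval_upto n p A (Suc N) = poly_mat_eval_upto n p A N + coeff p N \<cdot>\<^sub>m (A ^\<^sub>m N)"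
  unfolding poly_mat_eval_upto_def by simp

context
  fixes A :: "'a :: comm_ring_1 mat" and n :: nat
  assumes A: "A \<in> carrier_mat n n"
begin

lemma poly_mat_eval_upto_carrier [simp]: "poly_mat_eval_upto n p A N \<in> carrier_mat n n"
  by (induct N) (simp_all add: poly_mat_eval_upto_Suc A)

lemmas poly_mat_eval_upto_dim [simp] = carrier_matD[OF poly_mat_eval_upto_carrier]

lemma poly_mat_eval_upto_degree:
  assumes "degree p < N"
  shows "poly_mat_eval_upto n p A N = poly_mat_eval n p A"
  using assms
proof (induct N)
  case (Suc N)
  show ?case
  proof (cases "degree p < N")
    case True
    hence "coeff p N \<cdot>\<^sub>m (A ^\<^sub>m N) = 0\<^sub>m n n" using A by (intro eq_matI) (auto simp: coeff_eq_0)
    hence "poly_mat_eval_upto n p A (Suc N) = poly_mat_eval_upto n p A N"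
      by (simp add: poly_mat_eval_upto_Suc)
    thus ?thesis using Suc True by simp
  next
    case False
    with Suc have "N = degree p" by simp
    thus ?thesis unfolding poly_mat_eval_def poly_mat_eval_upto_def by simp
  qed
qed simp

lemma poly_mat_eval_carrier [simp]: "poly_mat_eval n p A \<in> carrier_mat n n"
  using poly_mat_eval_upto_degree[of p "Suc (degree p)"] by (metis lessI poly_mat_eval_upto_carrier)

lemma poly_mat_eval_upto_index:
  "i < n \<Longrightarrow> j < n \<Longrightarrow> poly_mat_eval_upto n p A N $$ (i,j) = (\<Sum>k<N. coeff p k * (A ^\<^sub>m k) $$ (i,j))"
  using A by (induct N) (auto simp: poly_mat_eval_upto_Suc)

lemma poly_mat_eval_upto_add:
  "poly_mat_eval_upto n (p + q) A N = poly_mat_eval_upto n p A N + poly_mat_eval_upto n q A N"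
  by (rule eq_matI) (simp_all add: poly_mat_eval_upto_index algebra_simps sum.distrib)

lemma poly_mat_eval_upto_smult:
  "poly_mat_eval_upto n (Polynomial.smult a p) A N = a \<cdot>\<^sub>m poly_mat_eval_upto n p A N"
  by (rule eq_matI) (simp_all add: poly_mat_eval_upto_index sum_distrib_left mult.assoc)

lemma poly_mat_eval_upto_pCons_0:
  "poly_mat_eval_upto n (pCons 0 p) A (Suc N) = A * poly_mat_eval_upto n p A N"
proof (induct N)
  case 0
  show ?case using A by (auto simp: poly_mat_eval_upto_Suc intro!: eq_matI)
next
  case (Suc N)
  have c: "A ^\<^sub>m N \<in> carrier_mat n n" "poly_mat_eval_upto n p A N \<in> carrier_mat n n" using A by auto
  have "A * (poly_mat_eval_upto n p A N + coeff p N \<cdot>\<^sub>m A ^\<^sub>m N)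
      = A * poly_mat_eval_upto n p A N + coeff p N \<cdot>\<^sub>m (A * A ^\<^sub>m N)"
    using mult_add_distrib_mat[OF A c(2) smult_carrier_mat[OF c(1)]] mult_smult_distrib[OF A c(1)]
    by simp
  thus ?case
    using Suc by (simp add: poly_mat_eval_upto_Suc[of _ _ _ "Suc N"] poly_mat_eval_upto_Suc[of _ _ _ N]
        pow_mat_Suc_left[OF A] del: pow_mat.simps)
qed

lemma poly_mat_eval_0: "poly_mat_eval n 0 A = 0\<^sub>m n n"
  using A unfolding poly_mat_eval_def by (auto intro!: eq_matI)

lemma poly_mat_eval_add:
  "poly_mat_eval n (p + q) A = poly_mat_eval n p A + poly_mat_eval n q A"
proof -
  define N where "N = Suc (degree p + degree q)"
  have "degree (p + q) < N" unfolding N_def using degree_add_le_max[of p q] by linarith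
  hence "poly_mat_eval n (p + q) A = poly_mat_eval_upto n (p + q) A N"
    by (rule poly_mat_eval_upto_degree[symmetric])
  also have "\<dots> = poly_mat_eval_upto n p A N + poly_mat_eval_upto n q A N"
    by (rule poly_mat_eval_upto_add)
  finally show ?thesis by (simp add: N_def poly_mat_eval_upto_degree)
qed

lemma poly_mat_eval_smult:
  "poly_mat_eval n (Polynomial.smult a p) A = a \<cdot>\<^sub>m poly_mat_eval n p A"
proof -
  have "degree (Polynomial.smult a p) < Suc (degree p)" using degree_smult_le[of a p] by simp
  hence "poly_mat_eval n (Polynomial.smult a p) A = poly_mat_eval_upto n (Polynomial.smult a p) A (Suc (degree p))"
    by (rule poly_mat_eval_upto_degree[symmetric])
  thus ?thesis by (simp add: poly_mat_eval_upto_smult poly_mat_eval_upto_degree)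
qed

lemma poly_mat_eval_pCons_0: "poly_mat_eval n (pCons 0 p) A = A * poly_mat_eval n p A"
proof -
  have "degree (pCons 0 p) < Suc (Suc (degree p))"
    using degree_pCons_le[of 0 p] by linarith
  thus ?thesis
    using poly_mat_eval_upto_pCons_0[of p "Suc (degree p)"]
    by (simp add: poly_mat_eval_upto_degree del: pCons_0_0)
qed

lemma poly_mat_eval_pCons:
  "poly_mat_eval n (pCons a p) A = a \<cdot>\<^sub>m 1\<^sub>m n + A * poly_mat_eval n p A"
proof -
  have "poly_mat_eval n (pCons a p) A = poly_mat_eval n [:a:] A + poly_mat_eval n (pCons 0 p) A"
    using poly_mat_eval_add[of "[:a:]" "pCons 0 p"] by simp
  moreover have "poly_mat_eval n [:a:] A = a \<cdot>\<^sub>m 1\<^sub>m n"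
    unfolding poly_mat_eval_def using A by simp
  ultimately show ?thesis by (simp add: poly_mat_eval_pCons_0)
qed

lemma poly_mat_eval_mult:
  "poly_mat_eval n (p * q) A = poly_mat_eval n p A * poly_mat_eval n q A"
proof (induct p)
  case 0
  show ?case by (simp add: poly_mat_eval_0 left_mult_zero_mat[OF poly_mat_eval_carrier])
next
  case (pCons a p)
  let ?E = "\<lambda>p. poly_mat_eval n p A"
  have c: "?E p \<in> carrier_mat n n" "?E q \<in> carrier_mat n n" using A by auto
  have "pCons a p * q = Polynomial.smult a q + pCons 0 (p * q)" by simp
  hence "?E (pCons a p * q) = a \<cdot>\<^sub>m ?E q + A * (?E p * ?E q)"
    using pCons(2) by (simp add: poly_mat_eval_add poly_mat_eval_smult poly_mat_eval_pCons_0
        del: mult_pCons_left)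
  also have "\<dots> = (a \<cdot>\<^sub>m 1\<^sub>m n + A * ?E p) * ?E q"
    using A c by (simp add: add_mult_distrib_mat[of _ n n _ _ n] mult_smult_assoc_mat[of _ n n _ n]
        left_mult_one_mat[OF c(2)] assoc_mult_mat[OF A c])
  finally show ?case by (simp add: poly_mat_eval_pCons)
qed

lemma poly_mat_eval_eigenvector:
  assumes v: "v \<in> carrier_vec n" and Av: "A *\<^sub>v v = k \<cdot>\<^sub>v v"
  shows "poly_mat_eval n p A *\<^sub>v v = poly p k \<cdot>\<^sub>v v"
proof (induct p)
  case 0
  show ?case using A v unfolding poly_mat_eval_def by (auto intro!: eq_vecI)
next
  case (pCons a p)
  have c: "poly_mat_eval n p A \<in> carrier_mat n n" by simp
  have "poly_mat_eval n (pCons a p) A *\<^sub>v v = (a \<cdot>\<^sub>m 1\<^sub>m n) *\<^sub>v v + (A * poly_mat_eval n p A) *\<^sub>v v"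
    unfolding poly_mat_eval_pCons using A v c by (intro add_mult_distrib_mat_vec) auto
  also have "\<dots> = a \<cdot>\<^sub>v v + A *\<^sub>v (poly p k \<cdot>\<^sub>v v)"
    using A v c pCons(2) by (simp add: smult_mat_mult_vec[of _ n n] assoc_mult_mat_vec[OF A c v])
  also have "A *\<^sub>v (poly p k \<cdot>\<^sub>v v) = poly p k \<cdot>\<^sub>v (A *\<^sub>v v)"
    using A v by (intro eq_vecI) (auto simp: scalar_prod_def sum_distrib_left ac_simps)
  also have "a \<cdot>\<^sub>v v + poly p k \<cdot>\<^sub>v (A *\<^sub>v v) = (a + k * poly p k) \<cdot>\<^sub>v v"
    using v by (intro eq_vecI) (auto simp: Av algebra_simps)
  finally show ?case by simp
qed

end

lemma poly_mat_eval_char_matrix: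
  assumes "(A :: 'a :: field mat) \<in> carrier_mat n n"
  shows "poly_mat_eval n [:-e, 1:] A = char_matrix A e"
  using assms
  by (auto simp: poly_mat_eval_pCons poly_mat_eval_0 char_matrix_def intro!: eq_matI)

section \<open>Consequences of the Jordan normal form\<close>

lemma complex_jordan_nf_exists:
  "(A :: complex mat) \<in> carrier_mat n n \<Longrightarrow> \<exists>n_as. jordan_nf A n_as"
  using char_poly_factorized jordan_nf_exists by blast

lemma sum_list_min_2_eq_1_iff: "sum_list (map (min 2) xs) = 1 \<longleftrightarrow> sum_list xs = (1 :: nat)"
proof -
  have "min 2 (sum_list xs) \<le> sum_list (map (min 2) xs)" "sum_list (map (min 2) xs) \<le> sum_list xs"
    by (induct xs) auto
  thus ?thesis by linarith
qed

text \<open>The order of \<open>e\<close> is the total size of its Jordan blocks, while the kernel of \<open>(A - e I)\<^sup>2\<close>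
  has dimension \<open>\<Sum> min 2 size\<close>.\<close>
lemma order_char_poly_eq_1_iff:
  fixes A :: "complex mat"
  assumes "A \<in> carrier_mat n n"
  shows "Polynomial.order e (char_poly A) = 1 \<longleftrightarrow> kernel_dim (char_matrix A e ^\<^sub>m 2) = 1"
proof -
  obtain n_as where jnf: "jordan_nf A n_as" using complex_jordan_nf_exists[OF assms] by blast
  define xs where "xs = map fst (filter (\<lambda>na. snd na = e) n_as)"
  have "kernel_dim (char_matrix A e ^\<^sub>m 2) = sum_list (map (min 2) xs)"
    using dim_gen_eigenspace[OF jnf, of e 2]
    unfolding dim_gen_eigenspace_def xs_def by (simp add: comp_def case_prod_unfold)
  thus ?thesis using jordan_nf_order[OF jnf, of e] sum_list_min_2_eq_1_iff[of xs] xs_def by simp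
qed

lemma spectral_radius_scaled_lt_1:
  fixes A :: "complex mat"
  assumes A: "A \<in> carrier_mat n n" and n: "0 < n" and r: "0 < r" "spectral_radius A < r"
  shows "spectral_radius (complex_of_real (1 / r) \<cdot>\<^sub>m A) < 1"
proof -
  let ?C = "complex_of_real (1 / r) \<cdot>\<^sub>m A"
  obtain w v where w: "eigenvector ?C v w" "spectral_radius ?C = cmod w"
    using spectral_radius_mem_max(1)[of ?C n] A n unfolding spectrum_def eigenvalue_def by auto
  have "A = complex_of_real r \<cdot>\<^sub>m ?C"
    using A r by (auto intro!: eq_matI simp flip: of_real_mult)
  hence "eigenvector A v (complex_of_real r * w)"
    using eigenvector_smult_mat[OF _ w(1), of n "complex_of_real r"] A by simp
  hence "eigenvalue A (complex_of_real r * w)" unfolding eigenvalue_def by blast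
  hence "cmod (complex_of_real r * w) \<le> spectral_radius A"
    using spectral_radius_mem_max(2)[OF A n] unfolding spectrum_def by auto
  hence "r * cmod w \<le> spectral_radius A" using r by (simp add: norm_mult)
  hence "r * cmod w < r * 1" using r by linarith
  thus ?thesis using w(2) r(1) by (simp only: mult_less_cancel_left_pos)
qed

text \<open>Rescale so that the spectral radius drops below one and the powers become bounded.\<close>
lemma geometric_decay_of_powers:
  fixes A :: "complex mat"
  assumes A: "A \<in> carrier_mat n n" and ev: "\<And>z. eigenvalue A z \<Longrightarrow> cmod z < 1"
  shows "\<exists>c r. 0 < r \<and> r < 1 \<and> (\<forall>k. norm_bound (A ^\<^sub>m k) (c * r ^ k))"
proof (cases "n = 0")
  case True
  thus ?thesis using A by (intro exI[of _ 0] exI[of _ "1/2"]) (auto simp: norm_bound_def)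
next
  case False
  obtain z where "eigenvalue A z" "spectral_radius A = cmod z"
    using spectral_radius_mem_max(1)[OF A] False unfolding spectrum_def by auto
  with ev have sr: "0 \<le> spectral_radius A" "spectral_radius A < 1" by auto
  define r where "r = (1 + spectral_radius A) / 2"
  have r: "0 < r" "r < 1" "spectral_radius A < r" unfolding r_def using sr by auto
  define C where "C = complex_of_real (1 / r) \<cdot>\<^sub>m A"
  have C: "C \<in> carrier_mat n n" unfolding C_def using A by simp
  obtain c where c: "\<And>k. norm_bound (C ^\<^sub>m k) c"
    using spectral_radius_jnf_norm_bound_less_1[OF C _ complex_jordan_nf_exists[OF C]]
      spectral_radius_scaled_lt_1[OF A _ r(1,3)] False unfolding C_def by blast
  have "norm_bound (A ^\<^sub>m k) (c * r ^ k)" for k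
  proof
    fix i j assume "i < dim_row (A ^\<^sub>m k)" "j < dim_col (A ^\<^sub>m k)"
    hence ij: "i < n" "j < n" using A by (auto split: if_splits)
    have "A = complex_of_real r \<cdot>\<^sub>m C"
      unfolding C_def using A r by (auto intro!: eq_matI simp flip: of_real_mult)
    hence "norm ((A ^\<^sub>m k) $$ (i, j)) = r ^ k * norm ((C ^\<^sub>m k) $$ (i, j))"
      using smult_pow_mat[OF C] ij C r by (simp add: norm_mult norm_power)
    also have "\<dots> \<le> r ^ k * c" using c[of k] ij C r unfolding norm_bound_def by simp
    finally show "norm ((A ^\<^sub>m k) $$ (i, j)) \<le> c * r ^ k" by (simp add: mult.commute)
  qed
  thus ?thesis using r by blast
qed

lemma Cauchy_Schwarz_sum:
  fixes u w :: "'a \<Rightarrow> real"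
  shows "(\<Sum>i\<in>I. u i * w i)\<^sup>2 \<le> (\<Sum>i\<in>I. (u i)\<^sup>2) * (\<Sum>i\<in>I. (w i)\<^sup>2)"
proof -
  have square: "(u i * w j - u j * w i)\<^sup>2
      = (u i)\<^sup>2 * (w j)\<^sup>2 + (u j)\<^sup>2 * (w i)\<^sup>2 - 2 * ((u i * w i) * (u j * w j))" for i j
    by (simp add: power2_eq_square algebra_simps)
  have "0 \<le> (\<Sum>i\<in>I. \<Sum>j\<in>I. (u i * w j - u j * w i)\<^sup>2)" by (intro sum_nonneg) auto
  also have "\<dots> = (\<Sum>i\<in>I. \<Sum>j\<in>I. (u i)\<^sup>2 * (w j)\<^sup>2) + (\<Sum>i\<in>I. \<Sum>j\<in>I. (u j)\<^sup>2 * (w i)\<^sup>2)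
      - 2 * (\<Sum>i\<in>I. \<Sum>j\<in>I. (u i * w i) * (u j * w j))"
    unfolding square by (simp only: sum.distrib sum_subtractf sum_distrib_left)
  also have "(\<Sum>i\<in>I. \<Sum>j\<in>I. (u i)\<^sup>2 * (w j)\<^sup>2) = (\<Sum>i\<in>I. (u i)\<^sup>2) * (\<Sum>i\<in>I. (w i)\<^sup>2)"
    by (simp add: sum_product)
  also have "(\<Sum>i\<in>I. \<Sum>j\<in>I. (u j)\<^sup>2 * (w i)\<^sup>2) = (\<Sum>i\<in>I. (u i)\<^sup>2) * (\<Sum>i\<in>I. (w i)\<^sup>2)"
    by (subst sum.swap) (simp add: sum_product)
  also have "(\<Sum>i\<in>I. \<Sum>j\<in>I. (u i * w i) * (u j * w j)) = (\<Sum>i\<in>I. u i * w i)\<^sup>2"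
    by (simp add: sum_product power2_eq_square)
  finally show ?thesis by simp
qed

lemma scalar_prod_Cauchy_Schwarz:
  fixes u w :: "real vec"
  assumes "u \<in> carrier_vec n" "w \<in> carrier_vec n"
  shows "(u \<bullet> w)\<^sup>2 \<le> (u \<bullet> u) * (w \<bullet> w)"
  using Cauchy_Schwarz_sum[of "\<lambda>i. u $ i" "\<lambda>i. w $ i" "{..<n}"] assms
  by (simp add: scalar_prod_sum power2_eq_square)

lemma real_scalar_prod_self:
  fixes v :: "real vec"
  assumes "v \<in> carrier_vec n"
  shows "0 \<le> v \<bullet> v" "v \<bullet> v = 0 \<longleftrightarrow> v = 0\<^sub>v n"
proof -
  have "conjugate v = v" by (auto simp: conjugate_vec_def)
  thus "0 \<le> v \<bullet> v" "v \<bullet> v = 0 \<longleftrightarrow> v = 0\<^sub>v n"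
    using conjugate_square_ge_0_vec[of v] conjugate_square_eq_0_vec[OF assms] by simp_all
qed

lemma linear_coeff_zero_if_quadratic_nonneg:
  fixes a K :: real
  assumes "\<And>t. 0 \<le> t * a + t\<^sup>2 * K"
  shows "a = 0"
proof (rule ccontr)
  assume "a \<noteq> 0"
  define s where "s = K\<^sup>2 + 1"
  have "2 * K \<le> K * K + 1" using zero_le_square[of "K - 1"] by (simp add: algebra_simps)
  hence s: "0 < s" "K < s" unfolding s_def power2_eq_square using zero_le_square[of K] by linarith+
  define t where "t = - a / s"
  have "t * a + t\<^sup>2 * K = a\<^sup>2 * (K - s) / s\<^sup>2"
    unfolding t_def using s by (simp add: field_simps power2_eq_square)
  also have "\<dots> < 0"
    using \<open>a \<noteq> 0\<close> s by (intro divide_neg_pos mult_pos_neg) auto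
  finally show False using assms[of t] by simp
qed

text \<open>A positive semidefinite form vanishes at \<open>x\<close> only if \<open>x\<close> lies in the kernel: expand the form
  along \<open>x + t M x\<close>, whose linear coefficient in \<open>t\<close> is \<open>2 |M x|\<^sup>2\<close>.\<close>
lemma psd_mat_quadratic_form_eq_0:
  assumes M: "M \<in> carrier_mat n n" and sym: "transpose_mat M = M" and psd: "psd_mat n M"
    and x: "x \<in> carrier_vec n" and zero: "x \<bullet> (M *\<^sub>v x) = 0"
  shows "M *\<^sub>v x = 0\<^sub>v n"
proof -
  define w where "w = M *\<^sub>v x"
  have w: "w \<in> carrier_vec n" "M *\<^sub>v w \<in> carrier_vec n" unfolding w_def using M x by auto
  have xMw: "x \<bullet> (M *\<^sub>v w) = w \<bullet> w"
    using transpose_vec_mult_scalar[OF M w(1) x] sym comm_scalar_prod[OF x w(2)]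
    unfolding w_def by simp
  have "0 \<le> t * (2 * (w \<bullet> w)) + t\<^sup>2 * (w \<bullet> (M *\<^sub>v w))" for t
  proof -
    have "(x + t \<cdot>\<^sub>v w) \<bullet> (M *\<^sub>v (x + t \<cdot>\<^sub>v w))
        = x \<bullet> w + t * (x \<bullet> (M *\<^sub>v w)) + t * (w \<bullet> w) + t * t * (w \<bullet> (M *\<^sub>v w))"
      using M x w by (simp add: mult_add_distrib_mat_vec mult_mat_vec add_scalar_prod_distrib[of _ n]
          scalar_prod_add_distrib[of _ n] w_def[symmetric] algebra_simps)
    also have "\<dots> = t * (2 * (w \<bullet> w)) + t\<^sup>2 * (w \<bullet> (M *\<^sub>v w))"
      using zero xMw unfolding w_def by (simp add: power2_eq_square algebra_simps)
    finally show ?thesis using psd x w unfolding psd_mat_def by (metis add_carrier_vec smult_carrier_vec)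
  qed
  hence "w \<bullet> w = 0" using linear_coeff_zero_if_quadratic_nonneg by fastforce
  thus ?thesis using real_scalar_prod_self(2)[OF w(1)] unfolding w_def by simp
qed

lemma quadratic_form_one_minus_gram:
  fixes W :: "real mat"
  assumes W: "W \<in> carrier_mat n n" and x: "x \<in> carrier_vec n"
  shows "x \<bullet> ((1\<^sub>m n - transpose_mat W * W) *\<^sub>v x) = x \<bullet> x - (W *\<^sub>v x) \<bullet> (W *\<^sub>v x)"
proof -
  have "(1\<^sub>m n - transpose_mat W * W) *\<^sub>v x = x - transpose_mat W *\<^sub>v (W *\<^sub>v x)"
    using W x by (simp add: minus_mult_distrib_mat_vec[of _ n n])
  moreover have "x \<bullet> (transpose_mat W *\<^sub>v (W *\<^sub>v x)) = (W *\<^sub>v x) \<bullet> (W *\<^sub>v x)"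
    using transpose_vec_mult_scalar[OF W x, of "W *\<^sub>v x"] comm_scalar_prod[OF x, of "transpose_mat W *\<^sub>v (W *\<^sub>v x)"] W x
    by simp
  ultimately show ?thesis using W x by (simp add: scalar_prod_minus_distrib[of _ n])
qed

lemma transpose_one_minus_gram:
  fixes W :: "real mat"
  assumes "W \<in> carrier_mat n n"
  shows "transpose_mat (1\<^sub>m n - transpose_mat W * W) = 1\<^sub>m n - transpose_mat W * W"
  using assms by (intro eq_matI) (auto simp: comm_scalar_prod[of _ n])

text \<open>For normal \<open>W\<close>, \<open>|W u|\<^sup>2 = u \<bullet> W\<^sup>T W u\<close> and \<open>|W\<^sup>T W u| = |W W u|\<close>, so Cauchy-Schwarz makes
  the sequence \<open>|W\<^sup>k u|\<^sup>2\<close> log-convex.\<close>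
lemma normal_mat_norm_sq_log_convex:
  fixes W :: "real mat"
  assumes W: "W \<in> carrier_mat n n" and normal: "W * transpose_mat W = transpose_mat W * W"
    and u: "u \<in> carrier_vec n"
  shows "((W *\<^sub>v u) \<bullet> (W *\<^sub>v u))\<^sup>2 \<le> (u \<bullet> u) * ((W *\<^sub>v (W *\<^sub>v u)) \<bullet> (W *\<^sub>v (W *\<^sub>v u)))"
proof -
  define z where "z = W *\<^sub>v u"
  define w where "w = transpose_mat W *\<^sub>v z"
  have z: "z \<in> carrier_vec n" and w: "w \<in> carrier_vec n" unfolding z_def w_def using W u by auto
  have "z \<bullet> z = u \<bullet> w"
    unfolding w_def z_def using transpose_vec_mult_scalar[OF W u, of "W *\<^sub>v u"] comm_scalar_prod[OF u] W u
    by (metis mult_mat_vec_carrier transpose_carrier_mat)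
  moreover have "w \<bullet> w = (W *\<^sub>v z) \<bullet> (W *\<^sub>v z)"
  proof -
    have "w \<bullet> w = z \<bullet> (W *\<^sub>v w)"
      using transpose_vec_mult_scalar[OF W w z] unfolding w_def by simp
    also have "W *\<^sub>v w = transpose_mat W *\<^sub>v (W *\<^sub>v z)"
      unfolding w_def using W z normal by (metis assoc_mult_mat_vec transpose_carrier_mat)
    also have "z \<bullet> \<dots> = (W *\<^sub>v z) \<bullet> (W *\<^sub>v z)"
      using transpose_vec_mult_scalar[OF W z, of "W *\<^sub>v z"] comm_scalar_prod[OF z] W z
      by (metis mult_mat_vec_carrier transpose_carrier_mat)
    finally show ?thesis .
  qed
  ultimately show ?thesis using scalar_prod_Cauchy_Schwarz[OF u w] unfolding z_def by simp
qed

lemma log_convex_sequence_ge_first: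
  fixes a :: "nat \<Rightarrow> real"
  assumes nonneg: "\<And>k. 0 \<le> a k" and log_convex: "\<And>k. (a (Suc k))\<^sup>2 \<le> a k * a (Suc (Suc k))"
    and pos: "0 < a 0" and start: "a 0 \<le> a 1"
  shows "a 0 \<le> a k"
proof -
  have "a 0 \<le> a k \<and> a k \<le> a (Suc k)" for k
  proof (induct k)
    case (Suc k)
    hence a_Suc: "0 < a (Suc k)" using pos by linarith
    have "a (Suc k) * a (Suc k) \<le> a k * a (Suc (Suc k))" using log_convex[of k] by (simp add: power2_eq_square)
    also have "\<dots> \<le> a (Suc k) * a (Suc (Suc k))" using Suc nonneg by (intro mult_right_mono) auto
    finally show ?case using Suc a_Suc by (simp add: mult_le_cancel_left_pos)
  qed (use start in simp)
  thus ?thesis by blast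
qed

lemma Re_cmat_mult_vec:
  assumes "A \<in> carrier_mat nr nc" "v \<in> carrier_vec nc"
  shows "map_vec Re (cmat A *\<^sub>v v) = A *\<^sub>v map_vec Re v" "map_vec Im (cmat A *\<^sub>v v) = A *\<^sub>v map_vec Im v"
  using assms by (auto intro!: eq_vecI sum.cong simp: scalar_prod_def Re_sum Im_sum)

lemma sum_cmod_sq_Re_Im:
  assumes "(v :: complex vec) \<in> carrier_vec n"
  shows "(\<Sum>i<n. (cmod (v $ i))\<^sup>2) = map_vec Re v \<bullet> map_vec Re v + map_vec Im v \<bullet> map_vec Im v"
  using assms by (simp add: scalar_prod_sum[of _ n] cmod_power2 sum.distrib flip: power2_eq_square)

lemma max_norm_coordinate:
  assumes "v \<in> carrier_vec n" "0 < n"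
  obtains i where "i < n" "\<And>j. j < n \<Longrightarrow> norm (v $ j) \<le> norm (v $ i)"
proof -
  have "Max ((\<lambda>j. norm (v $ j)) ` {..<n}) \<in> (\<lambda>j. norm (v $ j)) ` {..<n}"
    using assms by (intro Max_in) auto
  then obtain i where "i < n" "norm (v $ i) = Max ((\<lambda>j. norm (v $ j)) ` {..<n})" by auto
  thus ?thesis using that by (metis Max_ge finite_imageI finite_lessThan image_eqI lessThan_iff)
qed

text \<open>Compare the row of \<open>P\<close> through a coordinate of maximal modulus with its smallest entry \<open>d\<close>:
  since the coordinates of \<open>v\<close> sum to zero, subtracting \<open>d\<close> from that row does not change
  \<open>(P v)\<^sub>i\<close>, and the remaining weights sum to \<open>1 - n d < 1\<close>.\<close>
lemma positive_stochastic_mean_zero_eigenvalue: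
  fixes P :: "real mat" and v :: "complex vec"
  assumes P: "P \<in> carrier_mat n n" and pos: "\<And>i j. i < n \<Longrightarrow> j < n \<Longrightarrow> 0 < P $$ (i, j)"
    and rows: "P *\<^sub>v ones_vec n = ones_vec n"
    and ev: "eigenvector (cmat P) v z" and mean: "v \<bullet> ones_vec n = 0"
  shows "cmod z < 1"
proof -
  have v: "v \<in> carrier_vec n" "v \<noteq> 0\<^sub>v n" "cmat P *\<^sub>v v = z \<cdot>\<^sub>v v"
    using ev P unfolding eigenvector_def by auto
  have n: "0 < n" using v(1,2) by (cases n) auto
  obtain i where i: "i < n" and le_m: "\<And>j. j < n \<Longrightarrow> cmod (v $ j) \<le> cmod (v $ i)"
    using max_norm_coordinate[OF v(1) n] by blast
  define m where "m = cmod (v $ i)"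
  have m: "0 < m"
  proof -
    obtain j where "j < n" "v $ j \<noteq> 0" using v(1,2) by (metis carrier_vecD eq_vecI index_zero_vec)
    thus ?thesis using le_m[of j] zero_less_norm_iff[of "v $ j"] unfolding m_def by linarith
  qed
  define d where "d = Min ((\<lambda>j. P $$ (i, j)) ` {..<n})"
  have "d \<in> (\<lambda>j. P $$ (i, j)) ` {..<n}" unfolding d_def using n by (intro Min_in) auto
  hence "0 < d" using pos[OF i(1)] by auto
  moreover have "d \<le> P $$ (i, j)" if "j < n" for j unfolding d_def using that by (intro Min_le) auto
  ultimately have d: "0 < d" "\<And>j. j < n \<Longrightarrow> d \<le> P $$ (i, j)" by auto
  have row: "(\<Sum>j<n. P $$ (i, j)) = 1"
    using arg_cong[OF rows, of "\<lambda>w. w $ i"] mult_mat_vec_ones_vec_index[OF P i(1)] i(1) by simp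
  have "(cmat P *\<^sub>v v) $ i = (\<Sum>j<n. complex_of_real (P $$ (i, j)) * v $ j)"
    using mult_mat_vec_index_sum[of "cmat P" n n v i] P v(1) i(1) by (auto intro!: sum.cong)
  hence "z * v $ i = (\<Sum>j<n. complex_of_real (P $$ (i, j)) * v $ j)"
    using v(1,3) i(1) by simp
  also have "\<dots> = (\<Sum>j<n. complex_of_real (P $$ (i, j) - d) * v $ j) + complex_of_real d * (v \<bullet> ones_vec n)"
    using v(1) by (simp add: scalar_prod_ones_vec algebra_simps sum.distrib sum_distrib_left sum_subtractf)
  finally have shifted: "z * v $ i = (\<Sum>j<n. complex_of_real (P $$ (i, j) - d) * v $ j)"
    using mean by simp
  have "cmod z * m = cmod (z * v $ i)" unfolding m_def by (simp add: norm_mult)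
  also have "\<dots> \<le> (\<Sum>j<n. cmod (complex_of_real (P $$ (i, j) - d) * v $ j))"
    unfolding shifted by (rule norm_sum)
  also have "\<dots> = (\<Sum>j<n. (P $$ (i, j) - d) * cmod (v $ j))"
    using d(2) by (intro sum.cong) (auto simp: norm_mult simp del: of_real_diff)
  also have "\<dots> \<le> (\<Sum>j<n. (P $$ (i, j) - d) * m)"
    using d le_m unfolding m_def by (intro sum_mono mult_left_mono) auto
  also have "\<dots> = (1 - real n * d) * m" using row by (simp add: sum_distrib_right[symmetric] sum_subtractf)
  also have "\<dots> < 1 * m" using d(1) m n by (simp add: algebra_simps)
  finally show ?thesis using m by simp
qed

definition mean_zero_spectrum_in_disc :: "nat \<Rightarrow> real mat \<Rightarrow> bool" where
  "mean_zero_spectrum_in_disc n W \<longleftrightarrow>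
     (\<forall>z v. eigenvector (cmat W) v z \<and> v \<bullet> ones_vec n = 0 \<longrightarrow> cmod z < 1)"

definition contracts_mean_zero :: "nat \<Rightarrow> real mat \<Rightarrow> bool" where
  "contracts_mean_zero n W \<longleftrightarrow>
     (\<forall>y \<in> carrier_vec n. y \<noteq> 0\<^sub>v n \<and> y \<bullet> ones_vec n = 0 \<longrightarrow> (W *\<^sub>v y) \<bullet> (W *\<^sub>v y) < y \<bullet> y)"

locale unit_line_sums =
  fixes n :: nat and W :: "real mat"
  assumes n: "0 < n" and W: "W \<in> carrier_mat n n"
    and row_sums: "W *\<^sub>v ones_vec n = ones_vec n"
    and col_sums: "transpose_mat W *\<^sub>v ones_vec n = ones_vec n"
begin

lemma cmat_W: "cmat W \<in> carrier_mat n n"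
  using W by simp

lemma cmat_row_sums: "cmat W *\<^sub>v ones_vec n = ones_vec n"
  using cmat_mult_ones_vec[OF W] row_sums by auto

lemma cmat_col_sums: "transpose_mat (cmat W) *\<^sub>v ones_vec n = ones_vec n"
  using cmat_mult_ones_vec[of "transpose_mat W"] W col_sums by (auto simp: map_mat_transpose)

lemma eigenvector_mean_zero:
  assumes "eigenvector (cmat W) v z" "z \<noteq> 1"
  shows "v \<bullet> ones_vec n = 0"
proof -
  have v: "v \<in> carrier_vec n" "cmat W *\<^sub>v v = z \<cdot>\<^sub>v v" using assms(1) W unfolding eigenvector_def by auto
  have "z * (v \<bullet> ones_vec n) = v \<bullet> ones_vec n"
    using mult_mat_vec_scalar_prod_ones_vec[OF cmat_W cmat_col_sums v(1)] v by simp
  thus ?thesis using assms(2) by (metis mult_cancel_right1)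
qed

lemma mean_zero_multiple_of_ones:
  "(c \<cdot>\<^sub>v ones_vec n) \<bullet> ones_vec n = (0 :: 'a :: {comm_semiring_1, semiring_char_0, semiring_no_zero_divisors})
     \<longleftrightarrow> c = 0"
  unfolding smult_ones_vec_scalar_prod_ones_vec using n by simp

lemma disc_fixed_vector:
  assumes disc: "mean_zero_spectrum_in_disc n W" and u: "u \<in> carrier_vec n" and fixed: "cmat W *\<^sub>v u = u"
  shows "\<exists>c. u = c \<cdot>\<^sub>v ones_vec n"
proof -
  define c where "c = (u \<bullet> ones_vec n) / of_nat n"
  define w where "w = u - c \<cdot>\<^sub>v ones_vec n"
  have w: "w \<in> carrier_vec n" unfolding w_def using u by simp
  have "w \<bullet> ones_vec n = 0"
    unfolding w_def c_def using u n by (simp add: minus_scalar_prod_distrib[of _ n] smult_ones_vec_scalar_prod_ones_vec)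
  moreover have "cmat W *\<^sub>v w = 1 \<cdot>\<^sub>v w"
    unfolding w_def using u fixed cmat_row_sums by (simp add: mult_minus_distrib_mat_vec[OF cmat_W] mult_mat_vec[OF cmat_W])
  ultimately have "w = 0\<^sub>v n"
    using disc w cmat_W unfolding mean_zero_spectrum_in_disc_def eigenvector_def by force
  hence "u = c \<cdot>\<^sub>v ones_vec n" unfolding w_def using u by (auto simp: vec_eq_iff)
  thus ?thesis by blast
qed

section \<open>The eigenvalue one\<close>

abbreviation W_minus_I :: "complex mat" where
  "W_minus_I \<equiv> char_matrix (cmat W) 1"

lemma W_minus_I_carrier: "W_minus_I \<in> carrier_mat n n"
  using cmat_W by simp

lemma W_minus_I_mult_vec: "u \<in> carrier_vec n \<Longrightarrow> W_minus_I *\<^sub>v u = cmat W *\<^sub>v u - u"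
  using char_matrix_mult_vec[OF cmat_W] by simp

lemma W_minus_I_kernel_iff: "u \<in> carrier_vec n \<Longrightarrow> W_minus_I *\<^sub>v u = 0\<^sub>v n \<longleftrightarrow> cmat W *\<^sub>v u = u"
  using W_minus_I_mult_vec minus_vec_eq_zero_iff[of "cmat W *\<^sub>v u" n u] cmat_W by simp

lemma W_minus_I_sq_mult_vec:
  "u \<in> carrier_vec n \<Longrightarrow> (W_minus_I ^\<^sub>m 2) *\<^sub>v u = W_minus_I *\<^sub>v (W_minus_I *\<^sub>v u)"
  using W_minus_I_carrier by (simp add: numeral_2_eq_2)

lemma W_minus_I_ones_vec: "W_minus_I *\<^sub>v ones_vec n = 0\<^sub>v n"
  using W_minus_I_mult_vec[of "ones_vec n"] cmat_row_sums minus_cancel_vec[OF ones_vec_carrier] by simp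

lemma ones_vec_in_kernel_W_minus_I_sq: "ones_vec n \<in> mat_kernel (W_minus_I ^\<^sub>m 2)"
  using W_minus_I_carrier W_minus_I_ones_vec
  by (intro mat_kernelI[of _ n n]) (simp_all add: W_minus_I_sq_mult_vec)

text \<open>If \<open>(W - I)\<^sup>2 u = 0\<close> then \<open>(W - I) u\<close> is a fixed vector, hence a multiple of \<open>1\<close>; having
  coordinate sum zero (the column sums are one), that multiple is zero.\<close>
lemma disc_kernel_W_minus_I_sq:
  assumes disc: "mean_zero_spectrum_in_disc n W" and u: "u \<in> mat_kernel (W_minus_I ^\<^sub>m 2)"
  shows "\<exists>c. u = c \<cdot>\<^sub>v ones_vec n"
proof -
  have uc: "u \<in> carrier_vec n" using u mat_kernel_carrier[OF pow_carrier_mat[OF W_minus_I_carrier]] by auto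
  define w where "w = W_minus_I *\<^sub>v u"
  have w: "w \<in> carrier_vec n" unfolding w_def using uc W_minus_I_carrier by simp
  have "W_minus_I *\<^sub>v w = 0\<^sub>v n"
    using mat_kernelD(2)[OF pow_carrier_mat[OF W_minus_I_carrier] u] W_minus_I_sq_mult_vec[OF uc]
    unfolding w_def by simp
  then obtain c where wc: "w = c \<cdot>\<^sub>v ones_vec n"
    using disc_fixed_vector[OF disc w] W_minus_I_kernel_iff[OF w] by blast
  have "w \<bullet> ones_vec n = 0"
    unfolding w_def W_minus_I_mult_vec[OF uc] using uc cmat_W
    by (simp add: minus_scalar_prod_distrib[of _ n] mult_mat_vec_scalar_prod_ones_vec[OF cmat_W cmat_col_sums])
  hence "c = 0" using mean_zero_multiple_of_ones[of c] unfolding wc by simp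
  hence "W_minus_I *\<^sub>v u = 0\<^sub>v n" using wc unfolding w_def by (auto intro!: eq_vecI)
  thus ?thesis using disc_fixed_vector[OF disc uc] W_minus_I_kernel_iff[OF uc] by blast
qed

lemma disc_imp_order_one:
  assumes "mean_zero_spectrum_in_disc n W"
  shows "Polynomial.order 1 (char_poly (cmat W)) = 1"
  using order_char_poly_eq_1_iff[OF cmat_W] disc_kernel_W_minus_I_sq[OF assms]
    kernel_dim_eq_1_iff[OF pow_carrier_mat[OF W_minus_I_carrier] ones_vec_in_kernel_W_minus_I_sq
      ones_vec_neq_zero[OF n]]
  by auto

lemma disc_imp_one_simple_strictly_dominant:
  assumes disc: "mean_zero_spectrum_in_disc n W"
  shows "one_simple_strictly_dominant W"
  using disc_imp_order_one[OF disc] disc eigenvector_mean_zero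
  unfolding one_simple_strictly_dominant_def mean_zero_spectrum_in_disc_def eigenvalue_def by blast

text \<open>Every vector \<open>q(W) x\<close> lies in the kernel of \<open>(W - I)\<^sup>2\<close>, which is spanned by \<open>1\<close> and
  hence killed by \<open>W - I\<close>.\<close>
lemma disc_annihilator_drop_square_factor:
  assumes disc: "mean_zero_spectrum_in_disc n W"
    and zero: "poly_mat_eval n ([:-1, 1:] * ([:-1, 1:] * q)) (cmat W) = 0\<^sub>m n n"
  shows "poly_mat_eval n ([:-1, 1:] * q) (cmat W) = 0\<^sub>m n n"
proof -
  let ?Q = "poly_mat_eval n q (cmat W)"
  have Q: "?Q \<in> carrier_mat n n" using cmat_W by simp
  have eval: "poly_mat_eval n ([:-1, 1:] * r) (cmat W) = W_minus_I * poly_mat_eval n r (cmat W)" for r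
    unfolding poly_mat_eval_mult[OF cmat_W] poly_mat_eval_char_matrix[OF cmat_W] ..
  show ?thesis
  proof (rule mat_eq_zeroI)
    fix x :: "complex vec" assume x: "x \<in> carrier_vec n"
    have "(W_minus_I ^\<^sub>m 2) *\<^sub>v (?Q *\<^sub>v x) = (W_minus_I * (W_minus_I * ?Q)) *\<^sub>v x"
      using W_minus_I_carrier Q x by (simp add: W_minus_I_sq_mult_vec assoc_mult_mat_vec[of _ n n _ n])
    also have "\<dots> = 0\<^sub>v n" using zero x unfolding eval by simp
    finally have "(W_minus_I ^\<^sub>m 2) *\<^sub>v (?Q *\<^sub>v x) = 0\<^sub>v n" .
    hence "?Q *\<^sub>v x \<in> mat_kernel (W_minus_I ^\<^sub>m 2)"
      using x Q W_minus_I_carrier by (intro mat_kernelI[of _ n n]) auto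
    then obtain c where "?Q *\<^sub>v x = c \<cdot>\<^sub>v ones_vec n" using disc_kernel_W_minus_I_sq[OF disc] by blast
    thus "poly_mat_eval n ([:-1, 1:] * q) (cmat W) *\<^sub>v x = 0\<^sub>v n"
      using W_minus_I_carrier Q x unfolding eval
      by (auto simp: assoc_mult_mat_vec[of _ n n _ n] mult_mat_vec W_minus_I_ones_vec intro!: eq_vecI)
  qed (use cmat_W in simp)
qed

lemma disc_imp_min_poly_order:
  assumes disc: "mean_zero_spectrum_in_disc n W" and min: "is_min_poly n (cmat W) p"
  shows "Polynomial.order 1 p = 1"
proof -
  have p: "p \<noteq> 0" "poly_mat_eval n p (cmat W) = 0\<^sub>m n n"
    and minimal: "\<And>q. q \<noteq> 0 \<Longrightarrow> poly_mat_eval n q (cmat W) = 0\<^sub>m n n \<Longrightarrow> degree p \<le> degree q"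
    using min unfolding is_min_poly_def by auto
  have "poly p 1 \<cdot>\<^sub>v ones_vec n = 0\<^sub>v n"
    using poly_mat_eval_eigenvector[OF cmat_W ones_vec_carrier, of 1 p] cmat_row_sums p(2) by simp
  hence "poly p 1 = 0" using smult_vec_eq_0_iff[OF ones_vec_carrier ones_vec_neq_zero[OF n]] by blast
  hence "Polynomial.order 1 p \<noteq> 0" using p(1) order_root by blast
  moreover have "\<not> 2 \<le> Polynomial.order 1 p"
  proof
    assume "2 \<le> Polynomial.order 1 p"
    hence "[:-1, 1:] ^ 2 dvd p" by (meson le_imp_power_dvd order_1 dvd_trans)
    then obtain q where "p = [:-1, 1:] ^ 2 * q" by (elim dvdE)
    hence pq: "p = [:-1, 1:] * ([:-1, 1:] * q)" by (simp only: power2_eq_square mult.assoc)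
    have q: "q \<noteq> 0" using pq p(1) by auto
    have s: "[:-1, 1:] * q \<noteq> 0" using q no_zero_divisors[of "[:-1, 1:]" q] by simp
    have deg: "degree ([:-1, 1:] * r) = Suc (degree r)" if "r \<noteq> 0" for r :: "complex poly"
      using that by (subst degree_mult_eq) auto
    have "degree p \<le> degree ([:-1, 1:] * q)"
      using minimal[OF s disc_annihilator_drop_square_factor[OF disc p(2)[unfolded pq]]] .
    moreover have "degree p = Suc (degree ([:-1, 1:] * q))" unfolding pq by (rule deg[OF s])
    ultimately show False by simp
  qed
  ultimately show ?thesis by simp
qed

lemma disc_imp_marginally_schur_stable:
  assumes disc: "mean_zero_spectrum_in_disc n W"
  shows "marginally_schur_stable n W"
proof -
  have lt: "cmod z < 1" if "eigenvalue (cmat W) z" "z \<noteq> 1" for z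
    using disc_imp_one_simple_strictly_dominant[OF disc] that
    unfolding one_simple_strictly_dominant_def by blast
  hence "cmod z \<le> 1" if "eigenvalue (cmat W) z" for z
    using that by (cases "z = 1") force+
  moreover have "Polynomial.order z p = 1"
    if "eigenvalue (cmat W) z" "cmod z = 1" "is_min_poly n (cmat W) p" for z p
    using lt[OF that(1)] that(2,3) disc_imp_min_poly_order[OF disc] by (cases "z = 1") force+
  ultimately show ?thesis unfolding marginally_schur_stable_def by blast
qed

lemma one_simple_strictly_dominant_imp_disc:
  assumes osd: "one_simple_strictly_dominant W"
  shows "mean_zero_spectrum_in_disc n W"
  unfolding mean_zero_spectrum_in_disc_def
proof (intro allI impI, elim conjE)
  fix z v assume ev: "eigenvector (cmat W) v z" and mean: "v \<bullet> ones_vec n = 0"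
  have v: "v \<in> carrier_vec n" "v \<noteq> 0\<^sub>v n" "cmat W *\<^sub>v v = z \<cdot>\<^sub>v v"
    using ev cmat_W unfolding eigenvector_def by auto
  show "cmod z < 1"
  proof (cases "z = 1")
    case True
    have "v \<in> mat_kernel (W_minus_I ^\<^sub>m 2)"
      using v True W_minus_I_carrier
      by (intro mat_kernelI[of _ n n]) (simp_all add: W_minus_I_sq_mult_vec W_minus_I_mult_vec)
    moreover have "kernel_dim (W_minus_I ^\<^sub>m 2) = 1"
      using osd order_char_poly_eq_1_iff[OF cmat_W] unfolding one_simple_strictly_dominant_def by blast
    ultimately obtain c where v_c: "v = c \<cdot>\<^sub>v ones_vec n"
      using kernel_dim_eq_1_iff[OF pow_carrier_mat[OF W_minus_I_carrier] ones_vec_in_kernel_W_minus_I_sq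
        ones_vec_neq_zero[OF n]] by blast
    have "c = 0" using mean mean_zero_multiple_of_ones[of c] unfolding v_c by simp
    hence "v = 0\<^sub>v n" using v_c by (auto intro!: eq_vecI)
    thus ?thesis using v(2) by contradiction
  next
    case False
    thus ?thesis using osd ev unfolding one_simple_strictly_dominant_def eigenvalue_def by blast
  qed
qed

section \<open>Eventual positivity\<close>

lemma pow_row_sums:
  assumes "i < n"
  shows "(\<Sum>j<n. (W ^\<^sub>m t) $$ (i, j)) = 1"
proof -
  have "(W ^\<^sub>m t *\<^sub>v ones_vec n) $ i = 1"
    using pow_mat_mult_vec_fixed[OF W ones_vec_carrier row_sums] assms by simp
  thus ?thesis using mult_mat_vec_ones_vec_index[OF pow_carrier_mat[OF W] assms] by simp
qed

lemma col_sums_index: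
  assumes "j < n"
  shows "(\<Sum>i<n. W $$ (i, j)) = 1"
proof -
  have "(\<Sum>i<n. W $$ (i, j)) = (\<Sum>i<n. transpose_mat W $$ (j, i))"
    using W assms by (intro sum.cong) auto
  also have "\<dots> = (transpose_mat W *\<^sub>v ones_vec n) $ j"
    using mult_mat_vec_ones_vec_index[of "transpose_mat W" n n j] W assms by simp
  finally show ?thesis using col_sums assms by simp
qed

definition deviation :: "real mat" where
  "deviation = W - mat n n (\<lambda>_. 1 / real n)"

lemma deviation_carrier: "deviation \<in> carrier_mat n n"
  unfolding deviation_def by (simp add: minus_carrier_mat)

lemma deviation_index: "i < n \<Longrightarrow> j < n \<Longrightarrow> deviation $$ (i, j) = W $$ (i, j) - 1 / real n"
  unfolding deviation_def using W by simp

text \<open>\<open>W - J\<close> with \<open>J = 1 1\<^sup>T / n\<close>: since \<open>W J = J W = J\<^sup>2 = J\<close>, its powers are \<open>W\<^sup>t - J\<close>.\<close>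
lemma pow_deviation_index:
  assumes "1 \<le> t" "i < n" "j < n"
  shows "(deviation ^\<^sub>m t) $$ (i, j) = (W ^\<^sub>m t) $$ (i, j) - 1 / real n"
  using assms
proof (induct t arbitrary: i j rule: dec_induct)
  case base
  thus ?case using deviation_index W deviation_carrier by simp
next
  case (step t)
  have "(deviation ^\<^sub>m Suc t) $$ (i, j) = (\<Sum>k<n. ((W ^\<^sub>m t) $$ (i, k) - 1 / real n) * (W $$ (k, j) - 1 / real n))"
    using mult_mat_index_sum[OF pow_carrier_mat[OF deviation_carrier] deviation_carrier step(4,5)] step
      deviation_index by simp
  also have "\<dots> = (\<Sum>k<n. (W ^\<^sub>m t) $$ (i, k) * W $$ (k, j)) - (\<Sum>k<n. (W ^\<^sub>m t) $$ (i, k)) / real n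
      - (\<Sum>k<n. W $$ (k, j)) / real n + real n / (real n * real n)"
    by (simp add: algebra_simps sum_subtractf sum.distrib sum_distrib_left sum_divide_distrib)
  also have "\<dots> = (W ^\<^sub>m Suc t) $$ (i, j) - 1 / real n"
    using mult_mat_index_sum[OF pow_carrier_mat[OF W] W step(4,5)] pow_row_sums[OF step(4)]
      col_sums_index[OF step(5)] n by simp
  finally show ?case .
qed

lemma cmat_deviation_mult_vec:
  assumes v: "v \<in> carrier_vec n"
  shows "cmat deviation *\<^sub>v v = cmat W *\<^sub>v v - ((v \<bullet> ones_vec n) / of_nat n) \<cdot>\<^sub>v ones_vec n"
proof (rule eq_vecI)
  fix i assume "i < dim_vec (cmat W *\<^sub>v v - ((v \<bullet> ones_vec n) / of_nat n) \<cdot>\<^sub>v ones_vec n)"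
  hence i: "i < n" using W by simp
  have "(cmat deviation *\<^sub>v v) $ i = (\<Sum>j<n. (complex_of_real (W $$ (i, j)) - 1 / of_nat n) * v $ j)"
    using mult_mat_vec_index_sum[of "cmat deviation" n n v i] deviation_carrier v i
    by (auto simp: deviation_index intro!: sum.cong)
  also have "\<dots> = (\<Sum>j<n. complex_of_real (W $$ (i, j)) * v $ j) - (v \<bullet> ones_vec n) / of_nat n"
    using v by (simp add: scalar_prod_ones_vec algebra_simps sum_subtractf sum_divide_distrib)
  also have "\<dots> = (cmat W *\<^sub>v v - ((v \<bullet> ones_vec n) / of_nat n) \<cdot>\<^sub>v ones_vec n) $ i"
    using mult_mat_vec_index_sum[of "cmat W" n n v i] W v i by (auto intro!: sum.cong)
  finally show "(cmat deviation *\<^sub>v v) $ i = (cmat W *\<^sub>v v - ((v \<bullet> ones_vec n) / of_nat n) \<cdot>\<^sub>v ones_vec n) $ i" .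
qed (use W deviation_carrier in simp)

text \<open>\<open>W - J\<close> maps everything into the mean-zero subspace, on which it agrees with \<open>W\<close>.\<close>
lemma disc_imp_deviation_eigenvalue:
  assumes disc: "mean_zero_spectrum_in_disc n W" and ev: "eigenvalue (cmat deviation) z"
  shows "cmod z < 1"
proof (cases "z = 0")
  case False
  obtain v where v: "v \<in> carrier_vec n" "v \<noteq> 0\<^sub>v n" "cmat deviation *\<^sub>v v = z \<cdot>\<^sub>v v"
    using ev deviation_carrier unfolding eigenvalue_def eigenvector_def by auto
  have "z * (v \<bullet> ones_vec n) = (cmat deviation *\<^sub>v v) \<bullet> ones_vec n" using v by simp
  also have "\<dots> = (cmat W *\<^sub>v v) \<bullet> ones_vec n - (v \<bullet> ones_vec n) / of_nat n * of_nat n"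
    unfolding cmat_deviation_mult_vec[OF v(1)] smult_ones_vec_scalar_prod_ones_vec[symmetric]
    using v(1) cmat_W by (intro minus_scalar_prod_distrib[of _ n]) auto
  also have "\<dots> = 0"
    using n by (simp add: mult_mat_vec_scalar_prod_ones_vec[OF cmat_W cmat_col_sums v(1)])
  finally have mean: "v \<bullet> ones_vec n = 0" using False by simp
  hence "cmat W *\<^sub>v v = cmat deviation *\<^sub>v v"
    unfolding cmat_deviation_mult_vec[OF v(1)] using v(1) cmat_W by (auto intro!: eq_vecI)
  hence "eigenvector (cmat W) v z" using v cmat_W unfolding eigenvector_def by simp
  thus ?thesis using disc mean unfolding mean_zero_spectrum_in_disc_def by blast
qed simp

lemma disc_imp_deviation_decay:
  assumes "mean_zero_spectrum_in_disc n W"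
  shows "\<exists>r c. 0 < r \<and> r < 1 \<and> (\<forall>k i j. i < n \<longrightarrow> j < n \<longrightarrow> \<bar>(deviation ^\<^sub>m k) $$ (i, j)\<bar> \<le> c * r ^ k)"
proof -
  obtain c r where r: "0 < r" "r < 1" and bound: "\<And>k. norm_bound (cmat deviation ^\<^sub>m k) (c * r ^ k)"
    using geometric_decay_of_powers[of "cmat deviation" n] deviation_carrier
      disc_imp_deviation_eigenvalue[OF assms] by auto
  have "\<bar>(deviation ^\<^sub>m k) $$ (i, j)\<bar> \<le> c * r ^ k" if ij: "i < n" "j < n" for k i j
  proof -
    have "(cmat deviation ^\<^sub>m k) $$ (i, j) = complex_of_real ((deviation ^\<^sub>m k) $$ (i, j))"
      using ij deviation_carrier by (simp add: of_real_hom.mat_hom_pow[OF deviation_carrier, symmetric])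
    moreover have "cmod ((cmat deviation ^\<^sub>m k) $$ (i, j)) \<le> c * r ^ k"
      using bound[of k] ij pow_mat_dim_square[of "cmat deviation" n] deviation_carrier
      unfolding norm_bound_def by simp
    ultimately show ?thesis by simp
  qed
  with r show ?thesis by blast
qed

lemma disc_imp_eventually_positive:
  assumes disc: "mean_zero_spectrum_in_disc n W"
  shows "eventually_positive n W"
proof -
  obtain r c where r: "0 < r" "r < 1"
    and bound: "\<And>k i j. i < n \<Longrightarrow> j < n \<Longrightarrow> \<bar>(deviation ^\<^sub>m k) $$ (i, j)\<bar> \<le> c * r ^ k"
    using disc_imp_deviation_decay[OF disc] by blast
  have "\<bar>(deviation ^\<^sub>m 0) $$ (0, 0)\<bar> \<le> c" using bound[of 0 0 0] n by simp
  hence c: "0 \<le> c" by (rule order_trans[OF abs_ge_zero])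
  obtain K where K: "r ^ K < 1 / (real n * (c + 1))"
    using real_arch_pow_inv[of "1 / (real n * (c + 1))" r] n c r by auto
  show ?thesis unfolding eventually_positive_def
  proof (intro exI[of _ "Suc K"] allI impI)
    fix t i j assume t: "Suc K \<le> t" and ij: "i < n" "j < n"
    have "c * r ^ t \<le> c * r ^ K" using t r c by (intro mult_left_mono power_decreasing) auto
    also have "\<dots> \<le> (c + 1) * r ^ K" using r by (simp add: distrib_right)
    also have "\<dots> < (c + 1) * (1 / (real n * (c + 1)))" using K c by (intro mult_strict_left_mono) auto
    also have "\<dots> = 1 / real n" using c by simp
    finally have "c * r ^ t < 1 / real n" .
    moreover have "- ((deviation ^\<^sub>m t) $$ (i, j)) \<le> c * r ^ t" using bound[OF ij, of t] by simp
    ultimately have "0 < (deviation ^\<^sub>m t) $$ (i, j) + 1 / real n" by linarith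
    thus "0 < (W ^\<^sub>m t) $$ (i, j)" using pow_deviation_index[of t i j] t ij by simp
  qed
qed

lemma eventually_positive_imp_disc:
  assumes "eventually_positive n W"
  shows "mean_zero_spectrum_in_disc n W"
  unfolding mean_zero_spectrum_in_disc_def
proof (intro allI impI, elim conjE)
  fix z v assume ev: "eigenvector (cmat W) v z" and mean: "v \<bullet> ones_vec n = 0"
  obtain t where "\<forall>s\<ge>t. \<forall>i<n. \<forall>j<n. 0 < (W ^\<^sub>m s) $$ (i, j)"
    using assms unfolding eventually_positive_def by blast
  hence pos: "\<And>i j. i < n \<Longrightarrow> j < n \<Longrightarrow> 0 < (W ^\<^sub>m Suc t) $$ (i, j)"
    by (simp del: pow_mat.simps)
  have ev_pow: "eigenvector (cmat (W ^\<^sub>m Suc t)) v (z ^ Suc t)"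
    using ev eigenvector_pow[OF cmat_W ev, of "Suc t"] cmat_W
    unfolding of_real_hom.mat_hom_pow[OF W] eigenvector_def by (simp del: pow_mat.simps power.simps)
  have rows: "W ^\<^sub>m Suc t *\<^sub>v ones_vec n = ones_vec n"
    by (rule pow_mat_mult_vec_fixed[OF W ones_vec_carrier row_sums])
  have "cmod (z ^ Suc t) < 1"
    by (rule positive_stochastic_mean_zero_eigenvalue[OF pow_carrier_mat[OF W] pos rows ev_pow mean])
  thus "cmod z < 1" using power_less_one_iff[of "cmod z" "Suc t"] by (simp only: norm_power) simp
qed

section \<open>Contraction of mean-zero vectors\<close>

abbreviation defect :: "real mat" where
  "defect \<equiv> 1\<^sub>m n - transpose_mat W * W"

lemma defect_carrier: "defect \<in> carrier_mat n n"
  using W by (simp add: minus_carrier_mat)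

text \<open>Splitting off the mean, \<open>x = y + c 1\<close>, does not change \<open>|x|\<^sup>2 - |W x|\<^sup>2\<close>, because
  \<open>W 1 = 1\<close> and \<open>W\<close> preserves the mean-zero subspace.\<close>
lemma defect_form_mean_zero_part:
  assumes x: "x \<in> carrier_vec n"
  defines "y \<equiv> x - ((x \<bullet> ones_vec n) / real n) \<cdot>\<^sub>v ones_vec n"
  shows "y \<in> carrier_vec n" "y \<bullet> ones_vec n = 0" "x = y + ((x \<bullet> ones_vec n) / real n) \<cdot>\<^sub>v ones_vec n"
    "x \<bullet> (defect *\<^sub>v x) = y \<bullet> y - (W *\<^sub>v y) \<bullet> (W *\<^sub>v y)"
proof -
  define c where "c = (x \<bullet> ones_vec n) / real n"
  show y: "y \<in> carrier_vec n" unfolding y_def using x by simp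
  show mean: "y \<bullet> ones_vec n = 0"
    unfolding y_def using x n by (simp add: minus_scalar_prod_distrib[of _ n] smult_ones_vec_scalar_prod_ones_vec)
  show xy: "x = y + ((x \<bullet> ones_vec n) / real n) \<cdot>\<^sub>v ones_vec n" unfolding y_def using x by (auto intro!: eq_vecI)
  have "W *\<^sub>v x = W *\<^sub>v y + c \<cdot>\<^sub>v ones_vec n"
    unfolding c_def by (subst xy) (use W y row_sums in \<open>simp add: mult_add_distrib_mat_vec mult_mat_vec\<close>)
  moreover have "(W *\<^sub>v y) \<bullet> ones_vec n = 0"
    using mult_mat_vec_scalar_prod_ones_vec[OF W col_sums y] mean by simp
  ultimately have "(W *\<^sub>v x) \<bullet> (W *\<^sub>v x) = (W *\<^sub>v y) \<bullet> (W *\<^sub>v y) + c\<^sup>2 * real n"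
    using scalar_prod_add_ones_vec_self[of "W *\<^sub>v y" n c] W y by simp
  moreover have "x \<bullet> x = y \<bullet> y + c\<^sup>2 * real n"
    using scalar_prod_add_ones_vec_self[OF y mean, of c] xy unfolding c_def by simp
  ultimately show "x \<bullet> (defect *\<^sub>v x) = y \<bullet> y - (W *\<^sub>v y) \<bullet> (W *\<^sub>v y)"
    using quadratic_form_one_minus_gram[OF W x] by simp
qed

lemma ones_vec_in_kernel_defect: "ones_vec n \<in> mat_kernel defect"
proof -
  have "transpose_mat W *\<^sub>v (W *\<^sub>v ones_vec n) = ones_vec n" using row_sums col_sums by simp
  thus ?thesis using W defect_carrier
    by (intro mat_kernelI[of _ n n]) (simp_all add: minus_mult_distrib_mat_vec[of _ n n])
qed

lemma contracts_mean_zero_iff_defect: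
  "contracts_mean_zero n W \<longleftrightarrow> psd_mat n defect \<and> kernel_dim defect = 1"
proof
  assume contr: "contracts_mean_zero n W"
  have form: "0 \<le> x \<bullet> (defect *\<^sub>v x) \<and> (x \<bullet> (defect *\<^sub>v x) = 0 \<longrightarrow> (\<exists>c. x = c \<cdot>\<^sub>v ones_vec n))"
    if x: "x \<in> carrier_vec n" for x
  proof (cases "x - ((x \<bullet> ones_vec n) / real n) \<cdot>\<^sub>v ones_vec n = 0\<^sub>v n")
    case True
    thus ?thesis using defect_form_mean_zero_part[OF x] W by auto
  next
    case False
    thus ?thesis using defect_form_mean_zero_part[OF x] contr unfolding contracts_mean_zero_def by force
  qed
  hence "psd_mat n defect" unfolding psd_mat_def by blast
  moreover have "kernel_dim defect = 1"
    unfolding kernel_dim_eq_1_iff[OF defect_carrier ones_vec_in_kernel_defect ones_vec_neq_zero[OF n]]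
    using form mat_kernelD[OF defect_carrier] by fastforce
  ultimately show "psd_mat n defect \<and> kernel_dim defect = 1" ..
next
  assume "psd_mat n defect \<and> kernel_dim defect = 1"
  hence psd: "psd_mat n defect"
    and ker: "\<And>w. w \<in> mat_kernel defect \<Longrightarrow> \<exists>c. w = c \<cdot>\<^sub>v ones_vec n"
    using kernel_dim_eq_1_iff[OF defect_carrier ones_vec_in_kernel_defect ones_vec_neq_zero[OF n]] by auto
  show "contracts_mean_zero n W"
    unfolding contracts_mean_zero_def
  proof (intro ballI impI, elim conjE)
    fix y :: "real vec" assume y: "y \<in> carrier_vec n" and y0: "y \<noteq> 0\<^sub>v n" and mean: "y \<bullet> ones_vec n = 0"
    have "y \<bullet> (defect *\<^sub>v y) \<noteq> 0"
    proof
      assume "y \<bullet> (defect *\<^sub>v y) = 0"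
      hence "y \<in> mat_kernel defect"
        using psd_mat_quadratic_form_eq_0[OF defect_carrier transpose_one_minus_gram[OF W] psd y]
          defect_carrier y by (intro mat_kernelI[of _ n n]) auto
      then obtain c where yc: "y = c \<cdot>\<^sub>v ones_vec n" using ker by blast
      hence "c = 0" using mean mean_zero_multiple_of_ones[of c] by simp
      thus False using y0 yc by (auto intro!: eq_vecI)
    qed
    moreover have "0 \<le> y \<bullet> (defect *\<^sub>v y)" using psd y unfolding psd_mat_def by blast
    ultimately show "(W *\<^sub>v y) \<bullet> (W *\<^sub>v y) < y \<bullet> y" using quadratic_form_one_minus_gram[OF W y] by simp
  qed
qed

text \<open>Real and imaginary parts of a mean-zero eigenvector are mean-zero real vectors, and
  \<open>|W (Re v)|\<^sup>2 + |W (Im v)|\<^sup>2 = |z|\<^sup>2 (|Re v|\<^sup>2 + |Im v|\<^sup>2)\<close>.\<close>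
lemma contracts_mean_zero_imp_disc:
  assumes contr: "contracts_mean_zero n W"
  shows "mean_zero_spectrum_in_disc n W"
  unfolding mean_zero_spectrum_in_disc_def
proof (intro allI impI, elim conjE)
  fix z v assume ev: "eigenvector (cmat W) v z" and mean: "v \<bullet> ones_vec n = 0"
  have v: "v \<in> carrier_vec n" "v \<noteq> 0\<^sub>v n" "cmat W *\<^sub>v v = z \<cdot>\<^sub>v v"
    using ev cmat_W unfolding eigenvector_def by auto
  define a where "a = map_vec Re v"
  define b where "b = map_vec Im v"
  have ab: "a \<in> carrier_vec n" "b \<in> carrier_vec n" unfolding a_def b_def using v by auto
  have Wab: "W *\<^sub>v a \<in> carrier_vec n" "W *\<^sub>v b \<in> carrier_vec n" using W ab by auto
  have mean_ab: "a \<bullet> ones_vec n = 0" "b \<bullet> ones_vec n = 0"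
    using Re_scalar_prod_ones_vec[OF v(1)] mean unfolding a_def b_def by simp_all
  have le: "(W *\<^sub>v x) \<bullet> (W *\<^sub>v x) \<le> x \<bullet> x" if "x \<in> carrier_vec n" "x \<bullet> ones_vec n = 0" for x
    using contr that W unfolding contracts_mean_zero_def by (cases "x = 0\<^sub>v n") force+
  have "a \<noteq> 0\<^sub>v n \<or> b \<noteq> 0\<^sub>v n"
  proof (rule ccontr)
    assume "\<not> (a \<noteq> 0\<^sub>v n \<or> b \<noteq> 0\<^sub>v n)"
    hence "v = 0\<^sub>v n" using v(1) unfolding a_def b_def by (auto simp: vec_eq_iff complex_eq_iff)
    with v(2) show False ..
  qed
  hence lt: "(W *\<^sub>v a) \<bullet> (W *\<^sub>v a) + (W *\<^sub>v b) \<bullet> (W *\<^sub>v b) < a \<bullet> a + b \<bullet> b"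
    using contr le[OF ab(1) mean_ab(1)] le[OF ab(2) mean_ab(2)] ab mean_ab
    unfolding contracts_mean_zero_def by fastforce
  have "(W *\<^sub>v a) \<bullet> (W *\<^sub>v a) + (W *\<^sub>v b) \<bullet> (W *\<^sub>v b) = (\<Sum>i<n. (cmod ((cmat W *\<^sub>v v) $ i))\<^sup>2)"
    using sum_cmod_sq_Re_Im[of "cmat W *\<^sub>v v" n] Re_cmat_mult_vec[OF W v(1)] cmat_W v(1)
    unfolding a_def b_def by simp
  also have "\<dots> = (cmod z)\<^sup>2 * (a \<bullet> a + b \<bullet> b)"
    using sum_cmod_sq_Re_Im[OF v(1)] v unfolding a_def b_def
    by (simp add: norm_mult power_mult_distrib flip: sum_distrib_left)
  finally have eq: "(W *\<^sub>v a) \<bullet> (W *\<^sub>v a) + (W *\<^sub>v b) \<bullet> (W *\<^sub>v b) = (cmod z)\<^sup>2 * (a \<bullet> a + b \<bullet> b)" .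
  have "0 < a \<bullet> a + b \<bullet> b"
    using lt real_scalar_prod_self(1)[OF Wab(1)] real_scalar_prod_self(1)[OF Wab(2)] by linarith
  hence "(cmod z)\<^sup>2 < 1" using lt eq by (simp add: mult_less_cancel_right_pos[of _ _ 1, simplified])
  thus "cmod z < 1" by (simp add: power_less_one_iff)
qed

lemma pow_mult_mean_zero_index:
  assumes y: "y \<in> carrier_vec n" and mean: "y \<bullet> ones_vec n = 0" and i: "i < n"
  shows "(W ^\<^sub>m k *\<^sub>v y) $ i = (\<Sum>j<n. (deviation ^\<^sub>m k) $$ (i, j) * y $ j)"
proof (cases "k = 0")
  case True
  moreover have "W ^\<^sub>m 0 = deviation ^\<^sub>m 0" using W deviation_carrier by simp
  ultimately show ?thesis
    using mult_mat_vec_index_sum[OF pow_carrier_mat[OF deviation_carrier] y i, of 0] by (simp del: pow_mat.simps)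
next
  case False
  have "(W ^\<^sub>m k *\<^sub>v y) $ i = (\<Sum>j<n. ((deviation ^\<^sub>m k) $$ (i, j) + 1 / real n) * y $ j)"
    using mult_mat_vec_index_sum[OF pow_carrier_mat[OF W] y i] pow_deviation_index[of k i] False i
    by (auto intro!: sum.cong)
  also have "\<dots> = (\<Sum>j<n. (deviation ^\<^sub>m k) $$ (i, j) * y $ j) + (y \<bullet> ones_vec n) / real n"
    using y by (simp add: scalar_prod_ones_vec algebra_simps sum.distrib sum_divide_distrib)
  finally show ?thesis using mean by simp
qed

lemma disc_imp_mean_zero_orbit_decay:
  assumes disc: "mean_zero_spectrum_in_disc n W"
    and y: "y \<in> carrier_vec n" and mean: "y \<bullet> ones_vec n = 0"
  shows "\<exists>D q. 0 \<le> D \<and> 0 \<le> q \<and> q < 1 \<and> (\<forall>k. (W ^\<^sub>m k *\<^sub>v y) \<bullet> (W ^\<^sub>m k *\<^sub>v y) \<le> D * q ^ k)"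
proof -
  obtain r c where r: "0 < r" "r < 1"
    and bound: "\<And>k i j. i < n \<Longrightarrow> j < n \<Longrightarrow> \<bar>(deviation ^\<^sub>m k) $$ (i, j)\<bar> \<le> c * r ^ k"
    using disc_imp_deviation_decay[OF disc] by blast
  define S where "S = (\<Sum>j<n. \<bar>y $ j\<bar>)"
  have entry: "\<bar>(W ^\<^sub>m k *\<^sub>v y) $ i\<bar> \<le> c * r ^ k * S" if i: "i < n" for k i
  proof -
    have "\<bar>(W ^\<^sub>m k *\<^sub>v y) $ i\<bar> \<le> (\<Sum>j<n. \<bar>(deviation ^\<^sub>m k) $$ (i, j)\<bar> * \<bar>y $ j\<bar>)"
      unfolding pow_mult_mean_zero_index[OF y mean i] by (rule order_trans[OF sum_abs]) (simp add: abs_mult)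
    also have "\<dots> \<le> (\<Sum>j<n. c * r ^ k * \<bar>y $ j\<bar>)"
      using bound[OF i] by (intro sum_mono mult_right_mono) auto
    finally show ?thesis unfolding S_def by (simp add: sum_distrib_left)
  qed
  have "(W ^\<^sub>m k *\<^sub>v y) \<bullet> (W ^\<^sub>m k *\<^sub>v y) \<le> real n * (c * S)\<^sup>2 * (r\<^sup>2) ^ k" for k
  proof -
    have "(W ^\<^sub>m k *\<^sub>v y) \<bullet> (W ^\<^sub>m k *\<^sub>v y) = (\<Sum>i<n. \<bar>(W ^\<^sub>m k *\<^sub>v y) $ i\<bar>\<^sup>2)"
      using scalar_prod_sum[OF mult_mat_vec_carrier[OF pow_carrier_mat[OF W] y]
          mult_mat_vec_carrier[OF pow_carrier_mat[OF W] y]]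
      by (simp add: power2_eq_square del: index_mult_mat_vec)
    also have "\<dots> \<le> (\<Sum>i<n. (c * r ^ k * S)\<^sup>2)"
      using entry by (intro sum_mono power_mono) auto
    also have "\<dots> = real n * (c * S)\<^sup>2 * (r\<^sup>2) ^ k"
      unfolding power2_eq_square power_mult_distrib by (simp add: algebra_simps)
    finally show ?thesis .
  qed
  moreover have "r\<^sup>2 < 1" using r by (simp add: power_less_one_iff)
  ultimately show ?thesis by (intro exI[of _ "real n * (c * S)\<^sup>2"] exI[of _ "r\<^sup>2"]) auto
qed

lemma normal_disc_imp_contracts_mean_zero:
  assumes disc: "mean_zero_spectrum_in_disc n W"
    and normal: "W * transpose_mat W = transpose_mat W * W"
  shows "contracts_mean_zero n W"
  unfolding contracts_mean_zero_def
proof (intro ballI impI, elim conjE)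
  fix y :: "real vec" assume y: "y \<in> carrier_vec n" and y0: "y \<noteq> 0\<^sub>v n" and mean: "y \<bullet> ones_vec n = 0"
  define a where "a k = (W ^\<^sub>m k *\<^sub>v y) \<bullet> (W ^\<^sub>m k *\<^sub>v y)" for k
  have orbit: "W ^\<^sub>m k *\<^sub>v y \<in> carrier_vec n" for k
    by (rule mult_mat_vec_carrier[OF pow_carrier_mat[OF W] y])
  have orbit_Suc: "W ^\<^sub>m Suc k *\<^sub>v y = W *\<^sub>v (W ^\<^sub>m k *\<^sub>v y)" for k
    unfolding pow_mat_Suc_left[OF W] by (rule assoc_mult_mat_vec[OF W pow_carrier_mat[OF W] y])
  have a0: "0 < a 0"
    using real_scalar_prod_self[OF y] y0 W y unfolding a_def by (simp add: less_le)
  show "(W *\<^sub>v y) \<bullet> (W *\<^sub>v y) < y \<bullet> y"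
  proof (rule ccontr)
    assume "\<not> ?thesis"
    hence "a 0 \<le> a 1" using W y unfolding a_def by simp
    hence grow: "a 0 \<le> a k" for k
    proof (rule log_convex_sequence_ge_first[rotated 3])
      show "0 \<le> a k" for k unfolding a_def by (rule real_scalar_prod_self(1)[OF orbit])
      show "(a (Suc k))\<^sup>2 \<le> a k * a (Suc (Suc k))" for k
        unfolding a_def orbit_Suc by (rule normal_mat_norm_sq_log_convex[OF W normal orbit])
    qed (rule a0)
    obtain D q where D: "0 \<le> D" and q: "0 \<le> q" "q < 1" and decay: "\<And>k. a k \<le> D * q ^ k"
      using disc_imp_mean_zero_orbit_decay[OF disc y mean] unfolding a_def by blast
    obtain K where K: "q ^ K < a 0 / (D + 1)"
      using real_arch_pow_inv[of "a 0 / (D + 1)" q] a0 q D by auto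
    have "a K \<le> (D + 1) * q ^ K" using decay[of K] zero_le_power[OF q(1), of K] by (simp add: distrib_right)
    also have "\<dots> < a 0" using K D by (simp add: field_simps)
    finally show False using grow[of K] by simp
  qed
qed

end

theorem corollary3:
  fixes W :: "real mat" and n :: nat
  assumes "n > 0"
    and "W \<in> carrier_mat n n"
    and "W *\<^sub>v ones_vec n = ones_vec n"
    and "transpose_mat W *\<^sub>v ones_vec n = ones_vec n"
  shows "(eventually_doubly_stochastic n W \<longleftrightarrow>
            marginally_schur_stable n W \<and> one_simple_strictly_dominant W)
       \<and> (W * transpose_mat W = transpose_mat W * W \<longrightarrow>
            (eventually_doubly_stochastic n W \<longleftrightarrow>
               psd_mat n (1\<^sub>m n - transpose_mat W * W) \<and>
               kernel_dim (1\<^sub>m n - transpose_mat W * W) = 1))"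
proof -
  interpret unit_line_sums n W by unfold_locales (use assms in auto)
  have "eventually_doubly_stochastic n W \<longleftrightarrow> eventually_positive n W"
    unfolding eventually_doubly_stochastic_def eventually_stochastic_def using assms by auto
  also have "\<dots> \<longleftrightarrow> mean_zero_spectrum_in_disc n W"
    using disc_imp_eventually_positive eventually_positive_imp_disc by blast
  finally have eds: "eventually_doubly_stochastic n W \<longleftrightarrow> mean_zero_spectrum_in_disc n W" .
  have "mean_zero_spectrum_in_disc n W \<longleftrightarrow>
      marginally_schur_stable n W \<and> one_simple_strictly_dominant W"
    using disc_imp_marginally_schur_stable disc_imp_one_simple_strictly_dominant
      one_simple_strictly_dominant_imp_disc by blast
  moreover have "mean_zero_spectrum_in_disc n W \<longleftrightarrow>
      psd_mat n (1\<^sub>m n - transpose_mat W * W) \<and> kernel_dim (1\<^sub>m n - transpose_mat W * W) = 1"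
    if "W * transpose_mat W = transpose_mat W * W"
    using normal_disc_imp_contracts_mean_zero[OF _ that] contracts_mean_zero_imp_disc
      contracts_mean_zero_iff_defect by blast
  ultimately show ?thesis using eds by blast
qed

end
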